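(* Assume the growth conditions (G) and (C) hold with exponent $q_a\in\{0,1\}$. Let $q\ge1$. If $q_a=0$ assume $P$ has a finite $q$-th moment; if $q_a=1$ assume $P$ has a finite $(q+1)$-th moment. Let $g:\mathbb{R}^D\to\mathbb{R}^D$ be $C^1$ with $\|g(x)\|_2\le C_0(1+\|x\|_2^{q-1})$ and $\|\nabla g(x)\|_{\mathrm{op}}\le C_1(1+\|x\|_2^{q-1})$ for all $x\in\mathbb{R}^D$ and some constants $C_0,C_1>0$. Then $\mathbb{E}_{X\sim P}[\mathcal{T}_Pg(X)]=0$.
   Context: Setting: $P$ is a probability distribution on $\mathbb{R}^D$ with a positive continuously differentiable density $p$. Let $\sigma:\mathbb{R}^D\to\mathbb{R}^{D\times D'}$, $a(x)=\sigma(x)\sigma(x)^\top$, let $c:\mathbb{R}^D\to\mathbb{R}^{D\times D}$ be skew-symmetric ($c(x)=-c(x)^\top$), and $m=a+c$, with $x\mapsto p(x)m(x)$ continuously differentiable. For a matrix-valued $F$, $\langle\nabla,F(x)\rangle_i=\sum_j\partial_jF_{ji}(x)$. The drift is $b(x)=\langle\nabla,p(x)m(x)\rangle/(2p(x))$. For differentiable $g:\mathbb{R}^D\to\mathbb{R}^D$ let $(\nabla g(x))_{ij}=\partial_ig_j(x)$; the diffusion Stein operator is $\mathcal{T}_Pg(x)=\frac1{p(x)}\langle\nabla,p(x)m(x)g(x)\rangle=2\langle b(x),g(x)\rangle+\langle m(x),\nabla g(x)\rangle$ with $\langle A,B\rangle=\sum_{ij}A_{ij}B_{ij}$. $\|\cdot\|_{\mathrm{op}}$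 is the operator norm, $\|\cdot\|_F$ the Frobenius norm. Condition (G): there are $q_a\in\{0,1\}$ and $\lambda_b,\lambda_\sigma,\lambda_a>0$ with $\|b(x)\|_2\le\frac{\lambda_b}4(1+\|x\|_2)$, $\|\sigma(x)\|_F\le\frac{\lambda_\sigma}4(1+\|x\|_2)$, $\|a(x)\|_{\mathrm{op}}\le\frac{\lambda_a}4(1+\|x\|_2^{q_a+1})$ for all $x$. Condition (C): there is $\lambda_c>0$ with $\|c(x)\|_{\mathrm{op}}\le\frac{\lambda_c}4(1+\|x\|_2)^{q_a+1}$ for all $x$, with the same $q_a$. *)

theory Defs
  imports "HOL-Analysis.Analysis" "HOL-Probability.Probability"
begin

definition C1_on_UNIV :: "('a::euclidean_space \<Rightarrow> 'b::euclidean_space) \<Rightarrow> bool" where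
  "C1_on_UNIV f \<longleftrightarrow> (\<exists>f'. (\<forall>x. (f has_derivative blinfun_apply (f' x)) (at x)) \<and> continuous_on UNIV f')"

definition pderiv :: "'n::finite \<Rightarrow> (real^'n \<Rightarrow> real) \<Rightarrow> real^'n \<Rightarrow> real" where
  "pderiv j f x = frechet_derivative f (at x) (axis j 1)"

definition mat_div :: "(real^'n \<Rightarrow> real^'n^'n) \<Rightarrow> real^'n \<Rightarrow> real^'n::finite" where
  "mat_div F x = (\<chi> i. \<Sum>j\<in>UNIV. pderiv j (\<lambda>y. F y $ j $ i) x)"

definition jac :: "(real^'n \<Rightarrow> real^'n) \<Rightarrow> real^'n \<Rightarrow> real^'n^'n::finite" where
  "jac g x = (\<chi> i j. pderiv i (\<lambda>y. g y $ j) x)"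

definition frob_inner :: "real^'m^'n \<Rightarrow> real^'m^'n \<Rightarrow> real" where
  "frob_inner A B = (\<Sum>i\<in>UNIV. \<Sum>j\<in>UNIV. A $ i $ j * B $ i $ j)"

definition frob_norm :: "real^'m^'n \<Rightarrow> real" where
  "frob_norm A = sqrt (\<Sum>i\<in>UNIV. \<Sum>j\<in>UNIV. (A $ i $ j)^2)"

definition op_norm :: "real^'m^'n \<Rightarrow> real" where
  "op_norm A = onorm (\<lambda>v. A *v v)"

definition diff_a :: "(real^'n \<Rightarrow> real^'k^'n) \<Rightarrow> real^'n \<Rightarrow> real^'n^'n" where
  "diff_a sgm x = sgm x ** transpose (sgm x)"

definition drift :: "(real^'n \<Rightarrow> real) \<Rightarrow> (real^'n \<Rightarrow> real^'n^'n) \<Rightarrow> real^'n \<Rightarrow> real^'n::finite" where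
  "drift p m x = (1 / (2 * p x)) *\<^sub>R mat_div (\<lambda>y. p y *\<^sub>R m y) x"

definition stein_op :: "(real^'n \<Rightarrow> real) \<Rightarrow> (real^'n \<Rightarrow> real^'n^'n) \<Rightarrow> (real^'n \<Rightarrow> real^'n) \<Rightarrow> real^'n \<Rightarrow> real" where
  "stein_op p m g x = 2 * (drift p m x \<bullet> g x) + frob_inner (m x) (jac g x)"

(* t^e with the convention t^0 = 1 (also for t = 0) *)
definition rpow0 :: "real \<Rightarrow> real \<Rightarrow> real" where
  "rpow0 t e = (if e = 0 then 1 else t powr e)"

end

(*
  Multiplying by the density turns the Stein operator into a divergence:
  p (T_P g) = <nabla, p m g> = sum_j d_j F_j with the flux F = (p m) g.  Under (G) and (C),
  |m g| and |T_P g| grow at most like 1 + |x|^(q + q_a), so the moment assumption makes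
  both F and p (T_P g) Lebesgue integrable.  The integral of the divergence of such a field
  vanishes: against the cutoff phi_R(x) = max 0 (1 - |x|/R), which is (1/R)-Lipschitz, a
  difference-quotient integration by parts bounds the integral by |F|_1 / R, and
  dominated convergence lets R tend to infinity.
*)

theory Submission
  imports Defs
begin

section \<open>Integration by parts against Lipschitz cutoffs\<close>

lemma
  fixes f :: "'a::euclidean_space \<Rightarrow> real"
  assumes [measurable]: "f \<in> borel_measurable borel"
  shows lborel_integral_translate: "(\<integral>x. f (c + x) \<partial>lborel) = (\<integral>x. f x \<partial>lborel)"
    and lborel_integrable_translate_iff: "integrable lborel (\<lambda>x. f (c + x)) \<longleftrightarrow> integrable lborel f"
proof -
  have "(\<integral>x. f x \<partial>lborel) = (\<integral>x. f x \<partial>(distr lborel borel ((+) c)))"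
    by (simp add: lborel_distr_plus)
  also have "\<dots> = (\<integral>x. f (c + x) \<partial>lborel)"
    by (subst integral_distr) auto
  finally show "(\<integral>x. f (c + x) \<partial>lborel) = (\<integral>x. f x \<partial>lborel)" by simp
  have "integrable lborel f \<longleftrightarrow> integrable (distr lborel borel ((+) c)) f"
    by (simp add: lborel_distr_plus)
  also have "\<dots> \<longleftrightarrow> integrable lborel (\<lambda>x. f (c + x))"
    by (subst integrable_distr_eq) (auto simp: o_def)
  finally show "integrable lborel (\<lambda>x. f (c + x)) \<longleftrightarrow> integrable lborel f" by simp
qed

lemma integrable_bounded_mult:
  fixes f g :: "'a \<Rightarrow> real"
  assumes "integrable M g" and [measurable]: "f \<in> borel_measurable M" and "\<And>x. \<bar>f x\<bar> \<le> B"
  shows "integrable M (\<lambda>x. f x * g x)"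
proof (rule Bochner_Integration.integrable_bound[OF integrable_mult_right[OF integrable_abs[OF assms(1)], of B]])
  show "(\<lambda>x. f x * g x) \<in> borel_measurable M"
    using borel_measurable_integrable[OF assms(1)] by measurable
  have "\<bar>f x * g x\<bar> \<le> B * \<bar>g x\<bar>" for x
    using assms(3)[of x] by (simp add: abs_mult mult_right_mono)
  then show "AE x in M. norm (f x * g x) \<le> norm (B * \<bar>g x\<bar>)"
    by (intro AE_I2) (metis abs_ge_self order_trans real_norm_def)
qed

lemma integral_mult_difference_quotient:
  fixes F phi :: "'a::euclidean_space \<Rightarrow> real"
  assumes [measurable]: "F \<in> borel_measurable borel" "phi \<in> borel_measurable borel"
    and F: "integrable lborel F" and phi: "\<And>x. \<bar>phi x\<bar> \<le> B"
  shows "(\<integral>x. phi x * ((F (x + t *\<^sub>R v) - F x) / t) \<partial>lborel)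
       = (\<integral>x. (phi (x - t *\<^sub>R v) - phi x) / t * F x \<partial>lborel)"
proof -
  have F_shift: "integrable lborel (\<lambda>x. F (x + t *\<^sub>R v))"
    using lborel_integrable_translate_iff[of F "t *\<^sub>R v"] F by (simp add: add.commute)
  have int_phi_F_shift: "integrable lborel (\<lambda>x. phi x * F (x + t *\<^sub>R v))"
    by (rule integrable_bounded_mult[OF F_shift _ phi]) measurable
  have int_phi_F: "integrable lborel (\<lambda>x. phi x * F x)"
    by (rule integrable_bounded_mult[OF F _ phi]) measurable
  have int_phi_shift_F: "integrable lborel (\<lambda>x. phi (x - t *\<^sub>R v) * F x)"
    by (rule integrable_bounded_mult[OF F _ phi]) measurable
  have shift: "(\<integral>x. phi x * F (x + t *\<^sub>R v) \<partial>lborel) = (\<integral>x. phi (x - t *\<^sub>R v) * F x \<partial>lborel)"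
    using lborel_integral_translate[of "\<lambda>x. phi (x - t *\<^sub>R v) * F x" "t *\<^sub>R v"]
    by (simp add: add.commute)
  have "(\<integral>x. phi x * ((F (x + t *\<^sub>R v) - F x) / t) \<partial>lborel)
      = ((\<integral>x. phi x * F (x + t *\<^sub>R v) \<partial>lborel) - (\<integral>x. phi x * F x \<partial>lborel)) / t"
    using int_phi_F_shift int_phi_F by (simp add: algebra_simps diff_divide_distrib)
  also have "\<dots> = ((\<integral>x. phi (x - t *\<^sub>R v) * F x \<partial>lborel) - (\<integral>x. phi x * F x \<partial>lborel)) / t"
    by (simp add: shift)
  also have "\<dots> = (\<integral>x. (phi (x - t *\<^sub>R v) - phi x) / t * F x \<partial>lborel)"
    using int_phi_F int_phi_shift_F by (simp add: algebra_simps diff_divide_distrib)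
  finally show ?thesis .
qed

lemma abs_integral_lipschitz_difference_quotient_le:
  fixes F phi :: "'a::euclidean_space \<Rightarrow> real"
  assumes [measurable]: "F \<in> borel_measurable borel" "phi \<in> borel_measurable borel"
    and F: "integrable lborel F" and lip: "\<And>x y. \<bar>phi x - phi y\<bar> \<le> L * norm (x - y)"
    and t: "t > 0"
  shows "\<bar>\<integral>x. (phi (x - t *\<^sub>R v) - phi x) / t * F x \<partial>lborel\<bar> \<le> L * norm v * (\<integral>x. \<bar>F x\<bar> \<partial>lborel)"
proof -
  have quotient_le: "\<bar>(phi (x - t *\<^sub>R v) - phi x) / t\<bar> \<le> L * norm v" for x
    using lip[of "x - t *\<^sub>R v" x] t by (simp add: divide_le_eq mult_ac)
  have pointwise: "\<bar>(phi (x - t *\<^sub>R v) - phi x) / t * F x\<bar> \<le> L * norm v * \<bar>F x\<bar>" for x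
    using mult_right_mono[OF quotient_le abs_ge_zero] by (simp only: abs_mult)
  have int_quotient: "integrable lborel (\<lambda>x. (phi (x - t *\<^sub>R v) - phi x) / t * F x)"
    by (rule integrable_bounded_mult[OF F _ quotient_le]) measurable
  have "\<bar>\<integral>x. (phi (x - t *\<^sub>R v) - phi x) / t * F x \<partial>lborel\<bar>
      \<le> (\<integral>x. \<bar>(phi (x - t *\<^sub>R v) - phi x) / t * F x\<bar> \<partial>lborel)"
    by (rule integral_abs_bound)
  also have "\<dots> \<le> (\<integral>x. L * norm v * \<bar>F x\<bar> \<partial>lborel)"
    using F by (intro integral_mono[OF integrable_abs[OF int_quotient] _ pointwise]) auto
  finally show ?thesis by simp
qed

lemma directional_mean_value:
  fixes F D :: "'a::real_normed_vector \<Rightarrow> real"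
  assumes deriv: "\<And>x. ((\<lambda>t. F (x + t *\<^sub>R v)) has_real_derivative D x) (at 0)" and "0 < t"
  obtains s where "0 < s" "s < t" "(F (x + t *\<^sub>R v) - F x) / t = D (x + s *\<^sub>R v)"
proof -
  have "((\<lambda>s. F (x + s *\<^sub>R v)) has_real_derivative D (x + z *\<^sub>R v)) (at z)" for z
  proof -
    have "((\<lambda>s. F (x + (s + z) *\<^sub>R v)) has_real_derivative D (x + z *\<^sub>R v)) (at 0)"
      using deriv[of "x + z *\<^sub>R v"] by (simp add: algebra_simps)
    then show ?thesis using DERIV_shift[of "\<lambda>s. F (x + s *\<^sub>R v)" "D (x + z *\<^sub>R v)" 0 z] by simp
  qed
  then obtain s where "0 < s" "s < t" "F (x + t *\<^sub>R v) - F (x + 0 *\<^sub>R v) = (t - 0) * D (x + s *\<^sub>R v)"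
    using MVT2[of 0 t "\<lambda>s. F (x + s *\<^sub>R v)" "\<lambda>s. D (x + s *\<^sub>R v)"] \<open>0 < t\<close> by blast
  with that \<open>0 < t\<close> show ?thesis by simp
qed

lemma integral_difference_quotient_tendsto:
  fixes F D phi :: "'a::euclidean_space \<Rightarrow> real"
  assumes deriv: "\<And>x. ((\<lambda>t. F (x + t *\<^sub>R v)) has_real_derivative D x) (at 0)"
    and D: "continuous_on UNIV D"
    and [measurable]: "F \<in> borel_measurable borel" "phi \<in> borel_measurable borel"
    and supp: "\<And>x. R < norm x \<Longrightarrow> phi x = 0" and phi: "\<And>x. \<bar>phi x\<bar> \<le> B"
    and t: "\<And>k. 0 < t k" "\<And>k. t k \<le> 1" "t \<longlonglongrightarrow> 0"
  shows "integrable lborel (\<lambda>x. phi x * D x)"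
    and "(\<lambda>k. \<integral>x. phi x * ((F (x + t k *\<^sub>R v) - F x) / t k) \<partial>lborel)
         \<longlonglongrightarrow> (\<integral>x. phi x * D x \<partial>lborel)"
proof -
  have [measurable]: "D \<in> borel_measurable borel"
    using D by (rule borel_measurable_continuous_onI)
  define Q where "Q k x = phi x * ((F (x + t k *\<^sub>R v) - F x) / t k)" for k x
  have "filterlim t (at 0) sequentially"
    using t by (simp add: filterlim_at always_eventually less_imp_neq[symmetric])
  then have lim: "(\<lambda>k. Q k x) \<longlonglongrightarrow> phi x * D x" for x
  proof -
    have "((\<lambda>s. (F (x + s *\<^sub>R v) - F x) / s) \<longlongrightarrow> D x) (at 0)"
      using deriv[of x] unfolding has_field_derivative_iff by simp
    from filterlim_compose[OF this \<open>filterlim t (at 0) sequentially\<close>]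
    show ?thesis unfolding Q_def by (intro tendsto_mult tendsto_const)
  qed
  obtain M where M: "\<And>y. y \<in> cball 0 (R + norm v) \<Longrightarrow> \<bar>D y\<bar> \<le> M"
  proof -
    have "compact (D ` cball 0 (R + norm v))"
      by (rule compact_continuous_image) (auto intro: continuous_on_subset[OF D])
    then have "bounded (D ` cball 0 (R + norm v))"
      by (rule compact_imp_bounded)
    then obtain M where "\<forall>z \<in> D ` cball 0 (R + norm v). norm z \<le> M"
      unfolding bounded_iff ..
    then show ?thesis
      by (intro that) auto
  qed
  \<comment> \<open>By the mean value theorem each difference quotient is a value of D on a fixed compact set.\<close>
  have Q_bound: "norm (Q k x) \<le> B * M * indicator (cball 0 R) x" for k x
  proof (cases "R < norm x")
    case False
    obtain s where s: "0 < s" "s < t k" "(F (x + t k *\<^sub>R v) - F x) / t k = D (x + s *\<^sub>R v)"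
      using directional_mean_value[OF deriv t(1)] .
    have "s * norm v \<le> norm v"
      using s t(2)[of k] by (intro mult_left_le_one_le) auto
    then have "norm (x + s *\<^sub>R v) \<le> R + norm v"
      using norm_triangle_ineq[of x "s *\<^sub>R v"] False s by simp
    then have "\<bar>D (x + s *\<^sub>R v)\<bar> \<le> M" by (intro M) simp
    then show ?thesis
      using False phi[of x] by (simp add: Q_def s abs_mult mult_mono')
  next
    case True
    then show ?thesis
      by (simp add: Q_def supp indicator_def)
  qed
  have dominant: "integrable lborel (\<lambda>x. B * M * indicator (cball 0 R) x :: real)"
    using emeasure_lborel_cball_finite
    by (intro integrable_mult_right integrable_real_indicator) (auto simp: top.not_eq_extremum)
  have "Q k \<in> borel_measurable lborel" for k
    unfolding Q_def by measurable
  note dominated = this dominant AE_I2[OF lim] AE_I2[OF Q_bound]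
  have "(\<lambda>x. phi x * D x) \<in> borel_measurable lborel"
    by measurable
  from integrable_dominated_convergence[OF this dominated] integral_dominated_convergence[OF this dominated]
  show "integrable lborel (\<lambda>x. phi x * D x)"
    and "(\<lambda>k. \<integral>x. phi x * ((F (x + t k *\<^sub>R v) - F x) / t k) \<partial>lborel) \<longlonglongrightarrow> (\<integral>x. phi x * D x \<partial>lborel)"
    unfolding Q_def .
qed

lemma abs_integral_lipschitz_mult_deriv_le:
  fixes F D phi :: "'a::euclidean_space \<Rightarrow> real"
  assumes deriv: "\<And>x. ((\<lambda>t. F (x + t *\<^sub>R v)) has_real_derivative D x) (at 0)"
    and D: "continuous_on UNIV D"
    and mF[measurable]: "F \<in> borel_measurable borel"
    and mphi[measurable]: "phi \<in> borel_measurable borel"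
    and F: "integrable lborel F"
    and lip: "\<And>x y. \<bar>phi x - phi y\<bar> \<le> L * norm (x - y)"
    and supp: "\<And>x. R < norm x \<Longrightarrow> phi x = 0" and phi: "\<And>x. \<bar>phi x\<bar> \<le> B"
  shows "integrable lborel (\<lambda>x. phi x * D x)"
    and "\<bar>\<integral>x. phi x * D x \<partial>lborel\<bar> \<le> L * norm v * (\<integral>x. \<bar>F x\<bar> \<partial>lborel)"
proof -
  define t where "t k = 1 / real (Suc k)" for k
  have t: "0 < t k" "t k \<le> 1" for k
    by (auto simp: t_def)
  have "t \<longlonglongrightarrow> 0"
    unfolding t_def using LIMSEQ_inverse_real_of_nat by (simp add: inverse_eq_divide)
  note lim = integral_difference_quotient_tendsto[where R=R, OF deriv D mF mphi supp phi t this]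
  show "integrable lborel (\<lambda>x. phi x * D x)"
    using lim(1) by simp
  have "\<bar>\<integral>x. phi x * ((F (x + t k *\<^sub>R v) - F x) / t k) \<partial>lborel\<bar> \<le> L * norm v * (\<integral>x. \<bar>F x\<bar> \<partial>lborel)" for k
    unfolding integral_mult_difference_quotient[OF mF mphi F phi]
    by (rule abs_integral_lipschitz_difference_quotient_le[OF mF mphi F lip t(1)])
  with tendsto_rabs[OF lim(2)] show "\<bar>\<integral>x. phi x * D x \<partial>lborel\<bar> \<le> L * norm v * (\<integral>x. \<bar>F x\<bar> \<partial>lborel)"
    by (intro LIMSEQ_le_const2) auto
qed

definition radial_cutoff :: "real \<Rightarrow> 'a::real_normed_vector \<Rightarrow> real" where
  "radial_cutoff R x = max 0 (1 - norm x / R)"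

lemma radial_cutoff_lipschitz:
  assumes "R > 0"
  shows "\<bar>radial_cutoff R x - radial_cutoff R y\<bar> \<le> 1 / R * norm (x - y)"
proof -
  have "\<bar>radial_cutoff R x - radial_cutoff R y\<bar> \<le> \<bar>norm y - norm x\<bar> / R"
    using assms unfolding radial_cutoff_def by (simp add: max_def abs_if field_simps)
  also have "\<dots> \<le> norm (x - y) / R"
    using assms norm_triangle_ineq3[of y x] by (intro divide_right_mono) (auto simp: norm_minus_commute)
  finally show ?thesis by simp
qed

lemma radial_cutoff_eq_0: "R > 0 \<Longrightarrow> R < norm x \<Longrightarrow> radial_cutoff R x = 0"
  by (simp add: radial_cutoff_def max_def field_simps)

lemma abs_radial_cutoff_le_1: "R > 0 \<Longrightarrow> \<bar>radial_cutoff R x\<bar> \<le> 1"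
  by (simp add: radial_cutoff_def max_def field_simps)

lemma continuous_on_radial_cutoff: "R > 0 \<Longrightarrow> continuous_on S (radial_cutoff R)"
  unfolding radial_cutoff_def by (intro continuous_intros) auto

lemma radial_cutoff_tendsto_1: "(\<lambda>k. radial_cutoff (real (Suc k)) x) \<longlonglongrightarrow> 1"
proof -
  have "(\<lambda>k. max 0 (1 - norm x * inverse (real (Suc k)))) \<longlonglongrightarrow> max 0 (1 - norm x * 0)"
    by (intro tendsto_intros LIMSEQ_inverse_real_of_nat)
  then show ?thesis by (simp add: radial_cutoff_def divide_inverse)
qed

lemma abs_integral_radial_cutoff_mult_deriv_le:
  fixes F D :: "'a::euclidean_space \<Rightarrow> real"
  assumes deriv: "\<And>x. ((\<lambda>t. F (x + t *\<^sub>R v)) has_real_derivative D x) (at 0)"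
    and D: "continuous_on UNIV D" and mF: "F \<in> borel_measurable borel"
    and F: "integrable lborel F" and R: "R > 0"
  shows "integrable lborel (\<lambda>x. radial_cutoff R x * D x)"
    and "\<bar>\<integral>x. radial_cutoff R x * D x \<partial>lborel\<bar> \<le> 1 / R * norm v * (\<integral>x. \<bar>F x\<bar> \<partial>lborel)"
proof -
  have "radial_cutoff R \<in> borel_measurable borel"
    using R by (intro borel_measurable_continuous_onI continuous_on_radial_cutoff)
  from abs_integral_lipschitz_mult_deriv_le[OF deriv D mF this F radial_cutoff_lipschitz[OF R]
      radial_cutoff_eq_0[OF R] abs_radial_cutoff_le_1[OF R]]
  show "integrable lborel (\<lambda>x. radial_cutoff R x * D x)"
    and "\<bar>\<integral>x. radial_cutoff R x * D x \<partial>lborel\<bar> \<le> 1 / R * norm v * (\<integral>x. \<bar>F x\<bar> \<partial>lborel)"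
    by simp_all
qed

lemma integral_divergence_eq_0:
  fixes F D :: "'n::finite \<Rightarrow> real^'n \<Rightarrow> real"
  assumes deriv: "\<And>j x. ((\<lambda>t. F j (x + t *\<^sub>R axis j 1)) has_real_derivative D j x) (at 0)"
    and F_cont: "\<And>j. continuous_on UNIV (F j)" and D_cont: "\<And>j. continuous_on UNIV (D j)"
    and F: "\<And>j. integrable lborel (F j)"
    and div: "integrable lborel (\<lambda>x. \<Sum>j\<in>UNIV. D j x)"
  shows "(\<integral>x. (\<Sum>j\<in>UNIV. D j x) \<partial>lborel) = 0"
proof -
  have [measurable]: "F j \<in> borel_measurable borel" "D j \<in> borel_measurable borel" for j
    using F_cont D_cont by (auto intro: borel_measurable_continuous_onI)
  define phi :: "nat \<Rightarrow> real^'n \<Rightarrow> real" where "phi k = radial_cutoff (real (Suc k))" for k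
  have phi_le_1: "\<bar>phi k x\<bar> \<le> 1" for k x
    unfolding phi_def by (rule abs_radial_cutoff_le_1) simp
  have [measurable]: "phi k \<in> borel_measurable borel" for k
    unfolding phi_def by (intro borel_measurable_continuous_onI continuous_on_radial_cutoff) simp
  define S where "S = (\<Sum>j\<in>UNIV. \<integral>x. \<bar>F j x\<bar> \<partial>lborel)"
  have ibp: "integrable lborel (\<lambda>x. phi k x * D j x)"
    "\<bar>\<integral>x. phi k x * D j x \<partial>lborel\<bar> \<le> 1 / real (Suc k) * (\<integral>x. \<bar>F j x\<bar> \<partial>lborel)" for k j
    using abs_integral_radial_cutoff_mult_deriv_le[OF deriv D_cont _ F, where R="real (Suc k)"]
    by (auto simp: phi_def)
  have cutoff_integral_le: "\<bar>\<integral>x. phi k x * (\<Sum>j\<in>UNIV. D j x) \<partial>lborel\<bar> \<le> S / real (Suc k)" for k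
  proof -
    have "(\<integral>x. phi k x * (\<Sum>j\<in>UNIV. D j x) \<partial>lborel) = (\<Sum>j\<in>UNIV. \<integral>x. phi k x * D j x \<partial>lborel)"
      unfolding sum_distrib_left using ibp(1) by (rule Bochner_Integration.integral_sum)
    also have "\<bar>\<dots>\<bar> \<le> (\<Sum>j\<in>UNIV. 1 / real (Suc k) * (\<integral>x. \<bar>F j x\<bar> \<partial>lborel))"
      using ibp(2) by (intro order_trans[OF sum_abs sum_mono])
    finally show ?thesis
      by (simp add: S_def sum_divide_distrib)
  qed
  have cutoff_integral_tendsto: "(\<lambda>k. \<integral>x. phi k x * (\<Sum>j\<in>UNIV. D j x) \<partial>lborel) \<longlonglongrightarrow> (\<integral>x. (\<Sum>j\<in>UNIV. D j x) \<partial>lborel)"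
  proof (rule integral_dominated_convergence[OF _ _ integrable_abs[OF div]])
    show "AE x in lborel. (\<lambda>k. phi k x * (\<Sum>j\<in>UNIV. D j x)) \<longlonglongrightarrow> (\<Sum>j\<in>UNIV. D j x)"
      using tendsto_mult_right[OF radial_cutoff_tendsto_1] by (auto simp: phi_def)
    show "AE x in lborel. norm (phi k x * (\<Sum>j\<in>UNIV. D j x)) \<le> \<bar>\<Sum>j\<in>UNIV. D j x\<bar>" for k
      using phi_le_1 by (simp add: abs_mult mult_left_le_one_le)
  qed measurable
  have "(\<lambda>k. S / real (Suc k)) \<longlonglongrightarrow> 0"
    unfolding divide_inverse by (rule tendsto_mult_right_zero[OF LIMSEQ_inverse_real_of_nat])
  from tendsto_le[OF trivial_limit_sequentially this tendsto_rabs[OF cutoff_integral_tendsto]]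
  have "\<bar>\<integral>x. (\<Sum>j\<in>UNIV. D j x) \<partial>lborel\<bar> \<le> 0"
    using cutoff_integral_le by simp
  then show ?thesis by simp
qed

section \<open>Matrix norms\<close>

lemma abs_entry_le_op_norm: "\<bar>A $ i $ j\<bar> \<le> op_norm (A :: real^'m^'n)"
proof -
  have "A $ i $ j = (A *v axis j 1) $ i"
    by (simp add: matrix_vector_mult_def axis_def if_distrib cong: if_cong)
  also have "\<bar>\<dots>\<bar> \<le> norm (A *v axis j 1)"
    by (rule component_le_norm_cart)
  also have "\<dots> \<le> onorm ((*v) A) * norm (axis j (1::real) :: real^'m)"
    by (rule onorm[OF matrix_vector_mul_bounded_linear])
  finally show ?thesis by (simp add: op_norm_def)
qed

lemma op_norm_nonneg: "0 \<le> op_norm (A :: real^'m^'n)"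
  unfolding op_norm_def by (rule onorm_pos_le[OF matrix_vector_mul_bounded_linear])

lemma norm_matrix_vector_mult_le: "norm (A *v v) \<le> op_norm (A :: real^'m^'n) * norm v"
  unfolding op_norm_def by (rule onorm[OF matrix_vector_mul_bounded_linear])

lemma op_norm_add_le: "op_norm (A + B) \<le> op_norm A + op_norm (B :: real^'m^'n)"
  unfolding op_norm_def matrix_vector_mult_add_rdistrib
  by (rule onorm_triangle[OF matrix_vector_mul_bounded_linear matrix_vector_mul_bounded_linear])

lemma abs_frob_inner_le:
  "\<bar>frob_inner A B\<bar> \<le> real CARD('n) * real CARD('m) * (op_norm A * op_norm (B :: real^'m^'n))"
proof -
  have "\<bar>A $ i $ j * B $ i $ j\<bar> \<le> op_norm A * op_norm B" for i j
    by (simp add: abs_mult mult_mono abs_entry_le_op_norm op_norm_nonneg)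
  then have "\<bar>frob_inner A B\<bar> \<le> (\<Sum>i\<in>(UNIV::'n set). \<Sum>j\<in>(UNIV::'m set). op_norm A * op_norm B)"
    unfolding frob_inner_def
    by (intro order_trans[OF sum_abs sum_mono] order_trans[OF sum_abs sum_mono])
  then show ?thesis by simp
qed

section \<open>The Stein operator as a divergence\<close>

lemma has_derivative_vec_nth [derivative_intros]:
  "(f has_derivative f') F \<Longrightarrow> ((\<lambda>x. f x $ i) has_derivative (\<lambda>h. f' h $ i)) F"
  by (rule bounded_linear.has_derivative[OF bounded_linear_vec_nth])

lemma has_derivative_imp_directional_deriv:
  fixes f :: "'a::real_normed_vector \<Rightarrow> real"
  assumes "(f has_derivative f') (at x)"
  shows "((\<lambda>t. f (x + t *\<^sub>R v)) has_real_derivative f' v) (at 0)"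
proof -
  have "((\<lambda>t. f (x + t *\<^sub>R v)) has_derivative (\<lambda>t. f' (t *\<^sub>R v))) (at 0)"
    using assms by (auto intro!: derivative_eq_intros has_derivative_compose[of "\<lambda>t. x + t *\<^sub>R v" _ 0 UNIV f f', unfolded o_def])
  moreover have "(\<lambda>t. f' (t *\<^sub>R v)) = (*) (f' v)"
    using linear_scale[OF has_derivative_linear[OF assms]] by (auto simp: mult.commute)
  ultimately show ?thesis by (simp add: has_field_derivative_def)
qed

lemma pderiv_eq_derivative: "(f has_derivative f') (at x) \<Longrightarrow> pderiv j f x = f' (axis j 1)"
  unfolding pderiv_def by (metis frechet_derivative_at)

lemma stein_op_eq_divergence:
  fixes p :: "real^'n \<Rightarrow> real" and m :: "real^'n \<Rightarrow> real^'n^'n" and g :: "real^'n \<Rightarrow> real^'n"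
  assumes PM': "((\<lambda>y. p y *\<^sub>R m y) has_derivative PM') (at x)"
    and G': "(g has_derivative G') (at x)" and p: "p x \<noteq> 0"
  shows "p x * stein_op p m g x
       = (\<Sum>j\<in>UNIV. (PM' (axis j 1) *v g x + (p x *\<^sub>R m x) *v G' (axis j 1)) $ j)"
proof -
  have mat_div_eq: "mat_div (\<lambda>y. p y *\<^sub>R m y) x $ i = (\<Sum>j\<in>UNIV. PM' (axis j 1) $ j $ i)" for i
    using pderiv_eq_derivative[OF has_derivative_vec_nth[OF has_derivative_vec_nth[OF PM']]]
    by (simp add: mat_div_def)
  have jac_eq: "jac g x $ i $ j = G' (axis i 1) $ j" for i j
    using pderiv_eq_derivative[OF has_derivative_vec_nth[OF G']] by (simp add: jac_def)
  have drift_eq: "2 * (drift p m x \<bullet> g x) = (\<Sum>i\<in>UNIV. mat_div (\<lambda>y. p y *\<^sub>R m y) x $ i * g x $ i) / p x"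
    unfolding drift_def inner_vec_def by (simp add: sum_distrib_left sum_divide_distrib)
  have frob_eq: "p x * frob_inner (m x) (jac g x)
      = (\<Sum>i\<in>UNIV. \<Sum>j\<in>UNIV. p x * m x $ i $ j * G' (axis i 1) $ j)"
    unfolding frob_inner_def by (simp add: jac_eq sum_distrib_left mult.assoc)
  have "p x * stein_op p m g x
      = (\<Sum>i\<in>UNIV. (\<Sum>j\<in>UNIV. PM' (axis j 1) $ j $ i) * g x $ i)
        + (\<Sum>i\<in>UNIV. \<Sum>j\<in>UNIV. p x * m x $ i $ j * G' (axis i 1) $ j)"
    using p unfolding stein_op_def distrib_left drift_eq frob_eq by (simp add: mat_div_eq)
  also have "\<dots> = (\<Sum>j\<in>UNIV. \<Sum>i\<in>UNIV. PM' (axis j 1) $ j $ i * g x $ i)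
        + (\<Sum>j\<in>UNIV. \<Sum>i\<in>UNIV. p x * m x $ j $ i * G' (axis j 1) $ i)"
    unfolding sum_distrib_right by (subst sum.swap) (rule refl)
  also have "\<dots> = (\<Sum>j\<in>UNIV. (PM' (axis j 1) *v g x + (p x *\<^sub>R m x) *v G' (axis j 1)) $ j)"
    by (simp add: matrix_vector_mult_def sum.distrib mult.assoc)
  finally show ?thesis .
qed

lemma C1_on_UNIV_imp_continuous_on: "C1_on_UNIV f \<Longrightarrow> continuous_on UNIV f"
  unfolding C1_on_UNIV_def by (blast intro: continuous_at_imp_continuous_on has_derivative_continuous)

lemma stein_op_divergence_form:
  fixes p :: "real^'n \<Rightarrow> real" and m :: "real^'n \<Rightarrow> real^'n^'n" and g :: "real^'n \<Rightarrow> real^'n"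
  assumes p: "\<And>x. p x \<noteq> 0" and pm: "C1_on_UNIV (\<lambda>x. p x *\<^sub>R m x)" and g: "C1_on_UNIV g"
  obtains D where
    "\<And>j x. ((\<lambda>t. ((p (x + t *\<^sub>R axis j 1) *\<^sub>R m (x + t *\<^sub>R axis j 1)) *v g (x + t *\<^sub>R axis j 1)) $ j)
             has_real_derivative D j x) (at 0)"
    "\<And>j. continuous_on UNIV (D j)"
    "\<And>x. p x * stein_op p m g x = (\<Sum>j\<in>UNIV. D j x)"
proof -
  obtain PM' where PM': "\<And>x. ((\<lambda>x. p x *\<^sub>R m x) has_derivative blinfun_apply (PM' x)) (at x)"
    and PM'_cont: "continuous_on UNIV PM'"
    using pm unfolding C1_on_UNIV_def by blast
  obtain G' where G': "\<And>x. (g has_derivative blinfun_apply (G' x)) (at x)"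
    and G'_cont: "continuous_on UNIV G'"
    using g unfolding C1_on_UNIV_def by blast
  define PM where "PM x = p x *\<^sub>R m x" for x
  have PM'_PM: "(PM has_derivative blinfun_apply (PM' x)) (at x)" for x
    using PM' by (simp add: PM_def[abs_def])
  have PM_cont: "continuous_on UNIV PM" and g_cont: "continuous_on UNIV g"
    using C1_on_UNIV_imp_continuous_on[OF pm] C1_on_UNIV_imp_continuous_on[OF g]
    by (simp_all add: PM_def[abs_def])
  define D where "D j x = (PM' x (axis j 1) *v g x + PM x *v G' x (axis j 1)) $ j" for j x
  show thesis
  proof
    have "((\<lambda>x. (PM x *v g x) $ j) has_derivative (\<lambda>h. (PM' x h *v g x + PM x *v G' x h) $ j)) (at x)" for j x
      unfolding matrix_vector_mult_def vec_lambda_beta vector_add_component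
      by (auto intro!: derivative_eq_intros PM'_PM G' simp: sum.distrib)
    from has_derivative_imp_directional_deriv[OF this]
    show "((\<lambda>t. ((p (x + t *\<^sub>R axis j 1) *\<^sub>R m (x + t *\<^sub>R axis j 1)) *v g (x + t *\<^sub>R axis j 1)) $ j)
             has_real_derivative D j x) (at 0)" for j x
      by (simp add: D_def PM_def)
    show "continuous_on UNIV (D j)" for j
      unfolding D_def matrix_vector_mult_def by (intro continuous_intros PM_cont g_cont PM'_cont G'_cont)
    show "p x * stein_op p m g x = (\<Sum>j\<in>UNIV. D j x)" for x
      unfolding D_def PM_def by (rule stein_op_eq_divergence[OF PM' G' p])
  qed
qed

lemma stein_identity:
  fixes p :: "real^'n \<Rightarrow> real" and m :: "real^'n \<Rightarrow> real^'n^'n"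
    and g :: "real^'n \<Rightarrow> real^'n" and w\<^sub>1 w\<^sub>2 :: "real^'n \<Rightarrow> real"
  defines "P \<equiv> density lborel (\<lambda>x. ennreal (p x))"
  assumes p_pos: "\<And>x. 0 < p x" and p_cont: "continuous_on UNIV p"
    and pm: "C1_on_UNIV (\<lambda>x. p x *\<^sub>R m x)" and g: "C1_on_UNIV g"
    and w: "integrable P w\<^sub>1" "integrable P w\<^sub>2"
    and flux_le: "\<And>x. norm (m x *v g x) \<le> w\<^sub>1 x"
    and stein_le: "\<And>x. \<bar>stein_op p m g x\<bar> \<le> w\<^sub>2 x"
  shows "integrable P (stein_op p m g) \<and> (\<integral>x. stein_op p m g x \<partial>P) = 0"
proof -
  obtain D where D_deriv:
    "\<And>j x. ((\<lambda>t. ((p (x + t *\<^sub>R axis j 1) *\<^sub>R m (x + t *\<^sub>R axis j 1)) *v g (x + t *\<^sub>R axis j 1)) $ j)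
             has_real_derivative D j x) (at 0)"
    and D_cont: "\<And>j. continuous_on UNIV (D j)"
    and stein_eq: "\<And>x. p x * stein_op p m g x = (\<Sum>j\<in>UNIV. D j x)"
    using stein_op_divergence_form[OF less_imp_neq[OF p_pos, symmetric] pm g] by blast
  define F where "F j x = ((p x *\<^sub>R m x) *v g x) $ j" for j x
  have F_cont: "continuous_on UNIV (F j)" for j
    unfolding F_def matrix_vector_mult_def
    by (intro continuous_intros C1_on_UNIV_imp_continuous_on[OF pm] C1_on_UNIV_imp_continuous_on[OF g])
  have [measurable]: "p \<in> borel_measurable borel" "F j \<in> borel_measurable borel" "D j \<in> borel_measurable borel" for j
    using p_cont F_cont D_cont by (auto intro: borel_measurable_continuous_onI)
  have "stein_op p m g = (\<lambda>x. (\<Sum>j\<in>UNIV. D j x) / p x)"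
    using stein_eq p_pos by (auto simp: fun_eq_iff field_simps less_imp_neq[symmetric])
  then have [measurable]: "stein_op p m g \<in> borel_measurable borel"
    by simp
  have weighted: "integrable lborel (\<lambda>x. p x * w x)" if "integrable P w" for w
    using that borel_measurable_integrable[OF that] p_pos unfolding P_def
    by (subst (asm) integrable_density) (auto intro: less_imp_le)
  have "integrable lborel (F j)" for j
  proof (rule Bochner_Integration.integrable_bound[OF weighted[OF w(1)]])
    show "AE x in lborel. norm (F j x) \<le> norm (p x * w\<^sub>1 x)"
      using order_trans[OF component_le_norm_cart flux_le] p_pos
      by (intro AE_I2) (simp add: F_def abs_mult mult_left_mono order_trans[OF _ abs_ge_self]
          flip: scaleR_matrix_vector_assoc)
  qed measurable
  moreover have div_int: "integrable lborel (\<lambda>x. \<Sum>j\<in>UNIV. D j x)"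
  proof (rule Bochner_Integration.integrable_bound[OF weighted[OF w(2)]])
    show "AE x in lborel. norm (\<Sum>j\<in>UNIV. D j x) \<le> norm (p x * w\<^sub>2 x)"
      using stein_le p_pos unfolding stein_eq[symmetric]
      by (intro AE_I2) (simp add: abs_mult mult_left_mono order_trans[OF _ abs_ge_self])
  qed measurable
  ultimately have "(\<integral>x. (\<Sum>j\<in>UNIV. D j x) \<partial>lborel) = 0"
    using integral_divergence_eq_0[OF D_deriv[folded F_def] F_cont D_cont] by blast
  with div_int show ?thesis
    using p_pos stein_eq unfolding P_def by (simp add: integrable_density integral_density less_imp_le)
qed

section \<open>Polynomial growth\<close>

lemma one_plus_power_le_power_one_plus:
  fixes r :: real
  assumes r: "0 \<le> r" and n: "1 \<le> n"
  shows "1 + r ^ n \<le> (1 + r) ^ n"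
  using n
proof (induction n rule: dec_induct)
  case base
  then show ?case by simp
next
  case (step n)
  have "1 + r ^ Suc n \<le> (1 + r ^ n) * (1 + r)"
    using r by (simp add: algebra_simps)
  also have "\<dots> \<le> (1 + r) ^ n * (1 + r)"
    using step.IH r by (intro mult_right_mono) auto
  finally show ?case by (simp add: mult.commute)
qed

lemma growth_weight_le:
  fixes r q :: real
  assumes r: "0 \<le> r" and q: "1 \<le> q"
  shows "(1 + r) ^ k * (1 + rpow0 r (q - 1)) \<le> 2 ^ (k + 1) * (1 + r powr (q - 1 + real k))"
proof (cases "r \<le> 1")
  case True
  have "(1 + r) ^ k \<le> 2 ^ k"
    using True r by (intro power_mono) auto
  moreover have "1 + rpow0 r (q - 1) \<le> 2"
    using True r q by (simp add: rpow0_def powr_le1)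
  ultimately have "(1 + r) ^ k * (1 + rpow0 r (q - 1)) \<le> 2 ^ k * 2"
    by (intro mult_mono) (auto simp: rpow0_def)
  also have "\<dots> = 2 ^ (k + 1) * 1"
    by simp
  also have "\<dots> \<le> 2 ^ (k + 1) * (1 + r powr (q - 1 + real k))"
    by (intro mult_left_mono) auto
  finally show ?thesis .
next
  case False
  have "(1 + r) ^ k \<le> 2 ^ k * r powr real k"
    using False power_mono[of "1 + r" "2 * r" k] by (simp add: power_mult_distrib powr_realpow)
  moreover have "1 + rpow0 r (q - 1) \<le> 2 * r powr (q - 1)"
    using False q ge_one_powr_ge_zero[of r "q - 1"] by (simp add: rpow0_def)
  ultimately have "(1 + r) ^ k * (1 + rpow0 r (q - 1)) \<le> (2 ^ k * r powr real k) * (2 * r powr (q - 1))"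
    by (intro mult_mono) (auto simp: rpow0_def)
  also have "\<dots> = 2 ^ (k + 1) * r powr (q - 1 + real k)"
    using False by (simp add: powr_add)
  also have "\<dots> \<le> 2 ^ (k + 1) * (1 + r powr (q - 1 + real k))"
    by (intro mult_left_mono) auto
  finally show ?thesis .
qed

lemma mult_le_growth_weight:
  fixes a b A B r q :: real
  assumes "0 \<le> r" "1 \<le> q" "0 \<le> A" "0 \<le> B" "0 \<le> b"
    and a: "a \<le> A * (1 + r) ^ k" and b: "b \<le> B * (1 + rpow0 r (q - 1))"
  shows "a * b \<le> 2 ^ (k + 1) * (A * B) * (1 + r powr (q - 1 + real k))"
proof -
  have "a * b \<le> (A * (1 + r) ^ k) * (B * (1 + rpow0 r (q - 1)))"
    using assms by (intro mult_mono) auto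
  also have "\<dots> = (A * B) * ((1 + r) ^ k * (1 + rpow0 r (q - 1)))"
    by (simp add: mult_ac)
  also have "\<dots> \<le> (A * B) * (2 ^ (k + 1) * (1 + r powr (q - 1 + real k)))"
    using assms by (intro mult_left_mono growth_weight_le) auto
  finally show ?thesis by (simp add: mult_ac)
qed

lemma op_norm_add_le_power:
  fixes A C :: "real^'m^'n"
  assumes A: "op_norm A \<le> La * (1 + r ^ k)" and C: "op_norm C \<le> Lc * (1 + r) ^ k"
    and "0 \<le> La" "0 \<le> r" "1 \<le> k"
  shows "op_norm (A + C) \<le> (La + Lc) * (1 + r) ^ k"
proof -
  have "La * (1 + r ^ k) \<le> La * (1 + r) ^ k"
    using assms by (intro mult_left_mono one_plus_power_le_power_one_plus) auto
  then show ?thesis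
    using op_norm_add_le[of A C] A C by (simp add: distrib_right)
qed

lemma abs_stein_op_le:
  fixes g :: "real^'n \<Rightarrow> real^'n"
  shows "\<bar>stein_op p m g x\<bar>
    \<le> 2 * (norm (drift p m x) * norm (g x)) + real CARD('n) ^ 2 * (op_norm (m x) * op_norm (jac g x))"
  using Cauchy_Schwarz_ineq2[of "drift p m x" "g x"] abs_frob_inner_le[of "m x" "jac g x"]
  unfolding stein_op_def by (simp add: power2_eq_square abs_mult abs_triangle_ineq order_trans[OF abs_triangle_ineq])

lemma norm_matrix_vector_mult_le_growth:
  fixes M :: "real^'m^'n"
  assumes "0 \<le> r" "1 \<le> q" "0 \<le> Lm" "0 \<le> C0"
    and "op_norm M \<le> Lm * (1 + r) ^ k" and "norm v \<le> C0 * (1 + rpow0 r (q - 1))"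
  shows "norm (M *v v) \<le> 2 ^ (k + 1) * (Lm * C0) * (1 + r powr (q - 1 + real k))"
  using norm_matrix_vector_mult_le[of M v] mult_le_growth_weight[OF assms(1-4) norm_ge_zero assms(5,6)]
  by linarith

lemma abs_stein_op_le_growth:
  fixes g :: "real^'n \<Rightarrow> real^'n"
  assumes "1 \<le> q" "1 \<le> k" "0 \<le> Lb" "0 \<le> Lm" "0 \<le> C0" "0 \<le> C1"
    and drift: "norm (drift p m x) \<le> Lb * (1 + norm x)"
    and m: "op_norm (m x) \<le> Lm * (1 + norm x) ^ k"
    and g: "norm (g x) \<le> C0 * (1 + rpow0 (norm x) (q - 1))"
    and jac: "op_norm (jac g x) \<le> C1 * (1 + rpow0 (norm x) (q - 1))"
  shows "\<bar>stein_op p m g x\<bar>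
    \<le> 2 ^ (k + 1) * (2 * (Lb * C0) + real CARD('n) ^ 2 * (Lm * C1)) * (1 + norm x powr (q - 1 + real k))"
proof -
  have "(1 + norm x) ^ 1 \<le> (1 + norm x) ^ k"
    using assms by (intro power_increasing) auto
  then have "norm (drift p m x) \<le> Lb * (1 + norm x) ^ k"
    using drift \<open>0 \<le> Lb\<close> by (auto intro: order_trans mult_left_mono)
  then have "\<bar>stein_op p m g x\<bar>
      \<le> 2 * (2 ^ (k + 1) * (Lb * C0) * (1 + norm x powr (q - 1 + real k)))
        + real CARD('n) ^ 2 * (2 ^ (k + 1) * (Lm * C1) * (1 + norm x powr (q - 1 + real k)))"
    using assms
    by (intro order_trans[OF abs_stein_op_le] add_mono mult_left_mono mult_le_growth_weight op_norm_nonneg) auto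
  then show ?thesis
    by (simp add: algebra_simps)
qed

theorem mainTheorem3:
  fixes P :: "(real^'n) measure"
    and p :: "real^'n \<Rightarrow> real"
    and sgm :: "real^'n \<Rightarrow> real^'k^'n"
    and c :: "real^'n \<Rightarrow> real^'n^'n"
    and g :: "real^'n \<Rightarrow> real^'n"
    and qa :: nat and q lam_b lam_sigma lam_a lam_c C0 C1 :: real
  assumes P_def: "P = density lborel (\<lambda>x. ennreal (p x))"
    and P_prob: "prob_space P"
    and p_pos: "\<forall>x. p x > 0"
    and p_C1: "C1_on_UNIV p"
    and c_skew: "\<forall>x. transpose (c x) = - c x"
    and pm_C1: "C1_on_UNIV (\<lambda>x. p x *\<^sub>R (diff_a sgm x + c x))"
    and qa01: "qa \<in> {0, 1}"
    and lams: "lam_b > 0" "lam_sigma > 0" "lam_a > 0" "lam_c > 0"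
    and G_b: "\<forall>x. norm (drift p (\<lambda>y. diff_a sgm y + c y) x) \<le> lam_b / 4 * (1 + norm x)"
    and G_sigma: "\<forall>x. frob_norm (sgm x) \<le> lam_sigma / 4 * (1 + norm x)"
    and G_a: "\<forall>x. op_norm (diff_a sgm x) \<le> lam_a / 4 * (1 + norm x ^ (qa + 1))"
    and C_c: "\<forall>x. op_norm (c x) \<le> lam_c / 4 * (1 + norm x) ^ (qa + 1)"
    and q_ge: "q \<ge> 1"
    and moment0: "qa = 0 \<Longrightarrow> integrable P (\<lambda>x. norm x powr q)"
    and moment1: "qa = 1 \<Longrightarrow> integrable P (\<lambda>x. norm x powr (q + 1))"
    and g_C1: "C1_on_UNIV g"
    and C_pos: "C0 > 0" "C1 > 0"
    and g_bound: "\<forall>x. norm (g x) \<le> C0 * (1 + rpow0 (norm x) (q - 1))"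
    and Dg_bound: "\<forall>x. op_norm (jac g x) \<le> C1 * (1 + rpow0 (norm x) (q - 1))"
  shows "integrable P (stein_op p (\<lambda>y. diff_a sgm y + c y) g)
         \<and> (\<integral>x. stein_op p (\<lambda>y. diff_a sgm y + c y) g x \<partial>P) = 0"
proof -
  define m where "m = (\<lambda>y. diff_a sgm y + c y)"
  define W where "W x = 1 + norm x powr (q - 1 + real (qa + 1))" for x :: "real^'n"
  have "integrable P (\<lambda>x. norm x powr (q - 1 + real (qa + 1)))"
    using qa01 moment0 moment1 by auto
  then have W: "integrable P (\<lambda>x. K * W x)" for K
    unfolding W_def using prob_space.axioms(1)[OF P_prob]
    by (intro integrable_mult_right Bochner_Integration.integrable_add finite_measure.integrable_const)
  have m_le: "op_norm (m x) \<le> (lam_a / 4 + lam_c / 4) * (1 + norm x) ^ (qa + 1)" for x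
    unfolding m_def using G_a C_c lams by (intro op_norm_add_le_power) auto
  have flux_le: "norm (m x *v g x) \<le> 2 ^ (qa + 2) * ((lam_a / 4 + lam_c / 4) * C0) * W x" for x
    using norm_matrix_vector_mult_le_growth[OF norm_ge_zero q_ge _ _ m_le[of x]] g_bound lams C_pos
    by (simp add: W_def)
  have stein_le: "\<bar>stein_op p m g x\<bar>
      \<le> 2 ^ (qa + 2) * (2 * (lam_b / 4 * C0) + real CARD('n) ^ 2 * ((lam_a / 4 + lam_c / 4) * C1)) * W x" for x
    using abs_stein_op_le_growth[OF q_ge _ _ _ _ _ G_b[rule_format, of x, folded m_def] m_le
        g_bound[rule_format] Dg_bound[rule_format]] lams C_pos
    by (simp add: W_def)
  have "C1_on_UNIV (\<lambda>x. p x *\<^sub>R m x)"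
    using pm_C1 by (simp add: m_def)
  from stein_identity[OF p_pos[rule_format] C1_on_UNIV_imp_continuous_on[OF p_C1] this g_C1
      W[unfolded P_def] W[unfolded P_def] flux_le stein_le]
  show ?thesis
    unfolding P_def m_def .
qed

end
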